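(* Let $(P,\le,\mu,\gamma)$ be an $S$-sieved preordered heap (for a semilattice $S$). Then the relation $\le$ on $P$ is a preorder.
   Context: A preordered heap is a structure $(Q,\le,\mu,\gamma)$ with $(Q,\le)$ a preorder, $\mu\colon Q\times Q\to Q$ monotonic in both arguments, $\gamma\colon Q\to Q$ antitone, satisfying $\gamma(\gamma a)=a$, $\mu(a,\gamma(\mu(\gamma b,a)))\le b$ and $\mu(\gamma(\mu(a,\gamma b)),a)\le b$ for all $a,b$. A homomorphism of preordered heaps $f\colon Q\to Q'$ is an order-preserving map with $f(\mu(a,b))=\mu'(fa,fb)$ and $f(\gamma a)=\gamma'(fa)$. Let $S$ be a semilattice (an associative, commutative, idempotent binary operation, written $xy$). Let $\{(P_x,\le_x,\mu_x,\gamma_x)\}_{x\in S}$ be preordered heaps such that for all $x,y\in S$ there is a unique preordered-heap homomorphism $\iota\colon P_x\to P_{xy}$ (a concretization), with the concretization $P_x\to P_x$ being the identity, and such that for all $x,y,z\in S$ the composite of the concretizations $P_x\to P_{xy}\to P_{xyz}$ equals the concretization $P_x\to P_{xyz}$. Let $P=\bigsqcup_{x\in S}P_x$ (disjoint union). For $a\in P_x$, $b\in P_y$ with concretizations $\iota_x\colon P_x\to P_{xy}$, $\iota_y\colon P_y\to P_{xy}$, define $\mu(a,b)=\mu_{xy}(\iota_x a,\iota_y b)$ and $\gamma(a)=\gamma_x(a)$; and define $a\le b$ iff there exist $z\in S$ and concretizations $\iota\colon P_x\to P_z$, $\iota'\colon P_y\to P_z$ with $\iota(a)\le_z\iota'(b)$.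 Then $(P,\le,\mu,\gamma)$ is called an $S$-sieved preordered heap. *)

theory Defs
  imports Main
begin

definition preordered_heap ::
  "'a set \<Rightarrow> ('a \<Rightarrow> 'a \<Rightarrow> bool) \<Rightarrow> ('a \<Rightarrow> 'a \<Rightarrow> 'a) \<Rightarrow> ('a \<Rightarrow> 'a) \<Rightarrow> bool" where
  "preordered_heap A le mu gam \<longleftrightarrow>
     (\<forall>a\<in>A. le a a) \<and>
     (\<forall>a\<in>A. \<forall>b\<in>A. \<forall>c\<in>A. le a b \<longrightarrow> le b c \<longrightarrow> le a c) \<and>
     (\<forall>a\<in>A. \<forall>b\<in>A. mu a b \<in> A) \<and>
     (\<forall>a\<in>A. gam a \<in> A) \<and>
     (\<forall>a\<in>A. \<forall>a'\<in>A. \<forall>b\<in>A. le a a' \<longrightarrow> le (mu a b) (mu a' b)) \<and>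
     (\<forall>a\<in>A. \<forall>b\<in>A. \<forall>b'\<in>A. le b b' \<longrightarrow> le (mu a b) (mu a b')) \<and>
     (\<forall>a\<in>A. \<forall>b\<in>A. le a b \<longrightarrow> le (gam b) (gam a)) \<and>
     (\<forall>a\<in>A. gam (gam a) = a) \<and>
     (\<forall>a\<in>A. \<forall>b\<in>A. le (mu a (gam (mu (gam b) a))) b) \<and>
     (\<forall>a\<in>A. \<forall>b\<in>A. le (mu (gam (mu a (gam b))) a) b)"

definition heap_hom ::
  "'a set \<Rightarrow> ('a \<Rightarrow> 'a \<Rightarrow> bool) \<Rightarrow> ('a \<Rightarrow> 'a \<Rightarrow> 'a) \<Rightarrow> ('a \<Rightarrow> 'a) \<Rightarrow>
   'b set \<Rightarrow> ('b \<Rightarrow> 'b \<Rightarrow> bool) \<Rightarrow> ('b \<Rightarrow> 'b \<Rightarrow> 'b) \<Rightarrow> ('b \<Rightarrow> 'b) \<Rightarrow> ('a \<Rightarrow> 'b) \<Rightarrow> bool" where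
  "heap_hom A le mu gam B le' mu' gam' f \<longleftrightarrow>
     (\<forall>a\<in>A. f a \<in> B) \<and>
     (\<forall>a\<in>A. \<forall>b\<in>A. le a b \<longrightarrow> le' (f a) (f b)) \<and>
     (\<forall>a\<in>A. \<forall>b\<in>A. f (mu a b) = mu' (f a) (f b)) \<and>
     (\<forall>a\<in>A. f (gam a) = gam' (f a))"

text \<open>Family of preordered heaps indexed by a semilattice (type 's, operation m):
  carriers Pc x, orders Ple x, operations Pmu x, Pgam x.
  A concretization P_x \<rightarrow> P_z is a heap homomorphism P_x \<rightarrow> P_z where z = x*y.\<close>
definition concretization ::
  "('s \<Rightarrow> 'a set) \<Rightarrow> ('s \<Rightarrow> 'a \<Rightarrow> 'a \<Rightarrow> bool) \<Rightarrow> ('s \<Rightarrow> 'a \<Rightarrow> 'a \<Rightarrow> 'a) \<Rightarrow> ('s \<Rightarrow> 'a \<Rightarrow> 'a)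
   \<Rightarrow> 's \<Rightarrow> 's \<Rightarrow> ('a \<Rightarrow> 'a) \<Rightarrow> bool" where
  "concretization Pc Ple Pmu Pgam x z f \<longleftrightarrow>
     heap_hom (Pc x) (Ple x) (Pmu x) (Pgam x) (Pc z) (Ple z) (Pmu z) (Pgam z) f"

definition sieve_family ::
  "('s \<Rightarrow> 's \<Rightarrow> 's) \<Rightarrow> ('s \<Rightarrow> 'a set) \<Rightarrow> ('s \<Rightarrow> 'a \<Rightarrow> 'a \<Rightarrow> bool) \<Rightarrow> ('s \<Rightarrow> 'a \<Rightarrow> 'a \<Rightarrow> 'a)
   \<Rightarrow> ('s \<Rightarrow> 'a \<Rightarrow> 'a) \<Rightarrow> bool" where
  "sieve_family m Pc Ple Pmu Pgam \<longleftrightarrow>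
     semilattice m \<and>
     (\<forall>x. preordered_heap (Pc x) (Ple x) (Pmu x) (Pgam x)) \<and>
     (\<forall>x y. (\<exists>f. concretization Pc Ple Pmu Pgam x (m x y) f) \<and>
            (\<forall>f g. concretization Pc Ple Pmu Pgam x (m x y) f \<longrightarrow>
                   concretization Pc Ple Pmu Pgam x (m x y) g \<longrightarrow> (\<forall>a\<in>Pc x. f a = g a))) \<and>
     (\<forall>x f. concretization Pc Ple Pmu Pgam x x f \<longrightarrow> (\<forall>a\<in>Pc x. f a = a)) \<and>
     (\<forall>x y z f g h. concretization Pc Ple Pmu Pgam x (m x y) f \<longrightarrow>
            concretization Pc Ple Pmu Pgam (m x y) (m (m x y) z) g \<longrightarrow>
            concretization Pc Ple Pmu Pgam x (m (m x y) z) h \<longrightarrow> (\<forall>a\<in>Pc x. g (f a) = h a))"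

text \<open>The disjoint union P, as tagged pairs.\<close>
definition sieved_carrier :: "('s \<Rightarrow> 'a set) \<Rightarrow> ('s \<times> 'a) set" where
  "sieved_carrier Pc = {(x, a). a \<in> Pc x}"

definition sieved_le ::
  "('s \<Rightarrow> 's \<Rightarrow> 's) \<Rightarrow> ('s \<Rightarrow> 'a set) \<Rightarrow> ('s \<Rightarrow> 'a \<Rightarrow> 'a \<Rightarrow> bool) \<Rightarrow> ('s \<Rightarrow> 'a \<Rightarrow> 'a \<Rightarrow> 'a)
   \<Rightarrow> ('s \<Rightarrow> 'a \<Rightarrow> 'a) \<Rightarrow> 's \<times> 'a \<Rightarrow> 's \<times> 'a \<Rightarrow> bool" where
  "sieved_le m Pc Ple Pmu Pgam p q \<longleftrightarrow>
     (\<exists>z w w' f g. z = m (fst p) w \<and> z = m (fst q) w' \<and>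
        concretization Pc Ple Pmu Pgam (fst p) z f \<and>
        concretization Pc Ple Pmu Pgam (fst q) z g \<and>
        Ple z (f (snd p)) (g (snd q)))"

end

theory Submission
  imports Defs
begin

text \<open>Comparisons of \<open>(x, a)\<close> and \<open>(y, b)\<close> can be pushed along concretizations to any level
  above the one where they are witnessed. For transitivity, witnesses of \<open>p \<le> q\<close> and
  \<open>q \<le> r\<close> are moved to the join of their levels; there both images of the middle element
  come from concretizations out of the same fibre, so they coincide by uniqueness, and
  transitivity of that fibre finishes the argument.\<close>

lemma preordered_heap_refl: "\<lbrakk>preordered_heap A le mu gam; a \<in> A\<rbrakk> \<Longrightarrow> le a a"
  unfolding preordered_heap_def by simp

lemma preordered_heap_trans:
  assumes "preordered_heap A le mu gam" "a \<in> A" "b \<in> A" "c \<in> A" "le a b" "le b c"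
  shows "le a c"
proof -
  have "\<forall>a\<in>A. \<forall>b\<in>A. \<forall>c\<in>A. le a b \<longrightarrow> le b c \<longrightarrow> le a c"
    using assms(1) unfolding preordered_heap_def by (elim conjE)
  with assms(2-6) show ?thesis by blast
qed

lemma heap_hom_comp:
  assumes "heap_hom A le mu gam B le' mu' gam' f" "heap_hom B le' mu' gam' C le'' mu'' gam'' g"
  shows "heap_hom A le mu gam C le'' mu'' gam'' (g \<circ> f)"
  using assms unfolding heap_hom_def by auto

lemma concretization_comp:
  assumes "concretization Pc Ple Pmu Pgam x y f" "concretization Pc Ple Pmu Pgam y z g"
  shows "concretization Pc Ple Pmu Pgam x z (g \<circ> f)"
  using assms unfolding concretization_def by (rule heap_hom_comp)

lemma concretization_mem:
  assumes "concretization Pc Ple Pmu Pgam x y f" "a \<in> Pc x"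
  shows "f a \<in> Pc y"
  using assms unfolding concretization_def heap_hom_def by auto

lemma concretization_mono:
  assumes "concretization Pc Ple Pmu Pgam x y f" "a \<in> Pc x" "b \<in> Pc x" "Ple x a b"
  shows "Ple y (f a) (f b)"
  using assms unfolding concretization_def heap_hom_def by auto

definition sieved_le_at ::
  "('s \<Rightarrow> 's \<Rightarrow> 's) \<Rightarrow> ('s \<Rightarrow> 'a set) \<Rightarrow> ('s \<Rightarrow> 'a \<Rightarrow> 'a \<Rightarrow> bool) \<Rightarrow> ('s \<Rightarrow> 'a \<Rightarrow> 'a \<Rightarrow> 'a)
   \<Rightarrow> ('s \<Rightarrow> 'a \<Rightarrow> 'a) \<Rightarrow> 's \<Rightarrow> 's \<times> 'a \<Rightarrow> 's \<times> 'a \<Rightarrow> bool" where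
  "sieved_le_at m Pc Ple Pmu Pgam z p q \<longleftrightarrow>
     (\<exists>w w' f g. z = m (fst p) w \<and> z = m (fst q) w' \<and>
        concretization Pc Ple Pmu Pgam (fst p) z f \<and>
        concretization Pc Ple Pmu Pgam (fst q) z g \<and>
        Ple z (f (snd p)) (g (snd q)))"

lemma sieved_le_atI:
  assumes "z = m x w" "z = m y w'"
    and "concretization Pc Ple Pmu Pgam x z f" "concretization Pc Ple Pmu Pgam y z g"
    and "Ple z (f a) (g b)"
  shows "sieved_le_at m Pc Ple Pmu Pgam z (x, a) (y, b)"
  unfolding sieved_le_at_def fst_conv snd_conv using assms by blast

lemma sieved_le_atE:
  assumes "sieved_le_at m Pc Ple Pmu Pgam z (x, a) (y, b)"
  obtains w w' f g where "z = m x w" "z = m y w'"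
    and "concretization Pc Ple Pmu Pgam x z f" "concretization Pc Ple Pmu Pgam y z g"
    and "Ple z (f a) (g b)"
  using assms unfolding sieved_le_at_def fst_conv snd_conv by blast

lemma sieved_le_iff_ex_sieved_le_at:
  "sieved_le m Pc Ple Pmu Pgam p q \<longleftrightarrow> (\<exists>z. sieved_le_at m Pc Ple Pmu Pgam z p q)"
  unfolding sieved_le_def sieved_le_at_def by blast

lemma sieve_familyD:
  assumes "sieve_family m Pc Ple Pmu Pgam"
  shows "semilattice m"
    and "preordered_heap (Pc x) (Ple x) (Pmu x) (Pgam x)"
    and "\<exists>f. concretization Pc Ple Pmu Pgam x (m x y) f"
    and "\<lbrakk>concretization Pc Ple Pmu Pgam x (m x y) f; concretization Pc Ple Pmu Pgam x (m x y) g;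
          a \<in> Pc x\<rbrakk> \<Longrightarrow> f a = g a"
  using assms unfolding sieve_family_def by (elim conjE; simp)+

locale sieved_heap =
  fixes m :: "'s \<Rightarrow> 's \<Rightarrow> 's"
    and Pc :: "'s \<Rightarrow> 'a set" and Ple :: "'s \<Rightarrow> 'a \<Rightarrow> 'a \<Rightarrow> bool"
    and Pmu :: "'s \<Rightarrow> 'a \<Rightarrow> 'a \<Rightarrow> 'a" and Pgam :: "'s \<Rightarrow> 'a \<Rightarrow> 'a"
  assumes sieve_family: "sieve_family m Pc Ple Pmu Pgam"
begin

abbreviation conc :: "'s \<Rightarrow> 's \<Rightarrow> ('a \<Rightarrow> 'a) \<Rightarrow> bool" where
  "conc \<equiv> concretization Pc Ple Pmu Pgam"

abbreviation le_at :: "'s \<Rightarrow> 's \<times> 'a \<Rightarrow> 's \<times> 'a \<Rightarrow> bool" where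
  "le_at \<equiv> sieved_le_at m Pc Ple Pmu Pgam"

sublocale semilattice m
  using sieve_familyD(1)[OF sieve_family] .

lemmas fibre_refl = preordered_heap_refl[OF sieve_familyD(2)[OF sieve_family]]
  and fibre_trans = preordered_heap_trans[OF sieve_familyD(2)[OF sieve_family]]
  and concretization_exists = sieve_familyD(3)[OF sieve_family]

lemma concretization_unique:
  "\<lbrakk>z = m x w; conc x z f; conc x z g; a \<in> Pc x\<rbrakk> \<Longrightarrow> f a = g a"
  using sieve_familyD(4)[OF sieve_family] by blast

lemma sieved_le_at_refl:
  assumes "a \<in> Pc x"
  shows "le_at x (x, a) (x, a)"
proof -
  obtain f where "conc x (m x x) f"
    using concretization_exists by blast
  then have f: "conc x x f" by simp
  show ?thesis
    by (rule sieved_le_atI[where m = m, OF idem[symmetric] idem[symmetric] f f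
          fibre_refl[OF concretization_mem[OF f assms]]])
qed

lemma sieved_le_at_join:
  assumes "a \<in> Pc x" "b \<in> Pc y" "le_at z (x, a) (y, b)"
  shows "le_at (m z v) (x, a) (y, b)"
proof -
  obtain w w' f g where z: "z = m x w" "z = m y w'"
    and f: "conc x z f" and g: "conc y z g" and le: "Ple z (f a) (g b)"
    using assms(3) by (rule sieved_le_atE)
  obtain h where h: "conc z (m z v) h"
    using concretization_exists by blast
  have zx: "m z v = m x (m w v)"
    unfolding z(1) by (rule assoc)
  have zy: "m z v = m y (m w' v)"
    unfolding z(2) by (rule assoc)
  have "Ple (m z v) ((h \<circ> f) a) ((h \<circ> g) b)"
    unfolding comp_apply using concretization_mono[OF h concretization_mem[OF f assms(1)]
        concretization_mem[OF g assms(2)] le] .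
  then show ?thesis
    by (rule sieved_le_atI[where m = m, OF zx zy concretization_comp[OF f h]
          concretization_comp[OF g h]])
qed

lemma sieved_le_at_trans:
  assumes "a \<in> Pc x" "b \<in> Pc y" "c \<in> Pc u"
    and "le_at z (x, a) (y, b)" "le_at z (y, b) (u, c)"
  shows "le_at z (x, a) (u, c)"
proof -
  obtain w w' f g where z: "z = m x w" "z = m y w'"
    and f: "conc x z f" and g: "conc y z g" and ab: "Ple z (f a) (g b)"
    using assms(4) by (rule sieved_le_atE)
  obtain v v' f' g' where z': "z = m y v" "z = m u v'"
    and f': "conc y z f'" and g': "conc u z g'" and bc: "Ple z (f' b) (g' c)"
    using assms(5) by (rule sieved_le_atE)
  have "g b = f' b"
    using concretization_unique[OF z(2) g f' assms(2)] .
  with bc have "Ple z (f a) (g' c)"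
    using fibre_trans[OF concretization_mem[OF f assms(1)] concretization_mem[OF g assms(2)]
        concretization_mem[OF g' assms(3)] ab] by simp
  then show ?thesis
    by (rule sieved_le_atI[where m = m, OF z(1) z'(2) f g'])
qed

lemma sieved_le_refl: "p \<in> sieved_carrier Pc \<Longrightarrow> sieved_le m Pc Ple Pmu Pgam p p"
  unfolding sieved_carrier_def sieved_le_iff_ex_sieved_le_at
  using sieved_le_at_refl by auto

lemma sieved_le_trans:
  assumes "p \<in> sieved_carrier Pc" "q \<in> sieved_carrier Pc" "r \<in> sieved_carrier Pc"
    and "sieved_le m Pc Ple Pmu Pgam p q" "sieved_le m Pc Ple Pmu Pgam q r"
  shows "sieved_le m Pc Ple Pmu Pgam p r"
proof -
  obtain x a y b u c where pqr: "p = (x, a)" "q = (y, b)" "r = (u, c)"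
    and mem: "a \<in> Pc x" "b \<in> Pc y" "c \<in> Pc u"
    using assms(1-3) unfolding sieved_carrier_def by auto
  obtain z1 z2 where "le_at z1 p q" "le_at z2 q r"
    using assms(4,5) unfolding sieved_le_iff_ex_sieved_le_at by blast
  then have "le_at (m z1 z2) p q" "le_at (m z2 z1) q r"
    unfolding pqr using mem by (blast intro: sieved_le_at_join)+
  then have "le_at (m z1 z2) p r"
    unfolding pqr commute[of z2] by (rule sieved_le_at_trans[OF mem])
  then show ?thesis
    unfolding sieved_le_iff_ex_sieved_le_at by blast
qed

end

theorem lemma1:
  fixes m :: "'s \<Rightarrow> 's \<Rightarrow> 's"
    and Pc :: "'s \<Rightarrow> 'a set" and Ple :: "'s \<Rightarrow> 'a \<Rightarrow> 'a \<Rightarrow> bool"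
    and Pmu :: "'s \<Rightarrow> 'a \<Rightarrow> 'a \<Rightarrow> 'a" and Pgam :: "'s \<Rightarrow> 'a \<Rightarrow> 'a"
  assumes "sieve_family m Pc Ple Pmu Pgam"
  shows "(\<forall>p\<in>sieved_carrier Pc. sieved_le m Pc Ple Pmu Pgam p p) \<and>
         (\<forall>p\<in>sieved_carrier Pc. \<forall>q\<in>sieved_carrier Pc. \<forall>r\<in>sieved_carrier Pc.
            sieved_le m Pc Ple Pmu Pgam p q \<longrightarrow> sieved_le m Pc Ple Pmu Pgam q r \<longrightarrow>
            sieved_le m Pc Ple Pmu Pgam p r)"
proof -
  interpret sieved_heap m Pc Ple Pmu Pgam
    using assms by unfold_locales
  show ?thesis
    using sieved_le_refl sieved_le_trans by blast
qed

end
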